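(* In the finite-sum strongly monotone setting below, for any $0<\alpha\le\mu/(5nl^2)$ and $K\ge1$, the GDA iterates satisfy $$\max_{\tau_1,\dots,\tau_K\in\mathbb{S}_n}\|\mathbf{z}^{K+1}_0-\mathbf{z}^*\|^2\le 2e^{-n\alpha\mu K}\|\mathbf{z}_0-\mathbf{z}^*\|^2+\frac{3l^2\sigma_*^2\alpha^3n^3K}{\mu}.$$ Moreover, if $\|\nu(\mathbf{z}_0)\|K/\mu>1$ and $\alpha=\min\{\mu/(5nl^2),\,2\log(\|\nu(\mathbf{z}_0)\|K/\mu)/(\mu nK)\}$, then $$\max_{\tau_1,\dots,\tau_K\in\mathbb{S}_n}\|\mathbf{z}^{K+1}_0-\mathbf{z}^*\|^2\le 2e^{-K/(5\kappa^2)}\|\mathbf{z}_0-\mathbf{z}^*\|^2+\frac{2\mu^2+24\kappa^2\sigma_*^2\log^3(\|\nu(\mathbf{z}_0)\|K/\mu)}{\mu^2K^2}.$$ In particular this applies to the incremental gradient method ($\tau_k=\mathrm{id}$ for all $k$).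
   Context: Setting: $n\ge1$; $\omega_1,\dots,\omega_n:\mathbb{R}^d\to\mathbb{R}^d$ are each $l$-Lipschitz (not necessarily monotone), and $\nu=\frac1n\sum_{i=1}^n\omega_i$ is $\mu$-strongly monotone ($\langle\nu(\mathbf{z}_1)-\nu(\mathbf{z}_2),\mathbf{z}_1-\mathbf{z}_2\rangle\ge\mu\|\mathbf{z}_1-\mathbf{z}_2\|^2$), with unique root $\mathbf{z}^*$. $\kappa=l/\mu$ and $\sigma_*^2=\frac1n\sum_{i=1}^n\|\omega_i(\mathbf{z}^* )\|^2$. $\mathbb{S}_n$ is the set of permutations of $[n]$. GDA with permutations $\tau_1,\dots,\tau_K$: $\mathbf{z}^1_0=\mathbf{z}_0$; in epoch $k$, $\mathbf{z}^k_i=\mathbf{z}^k_{i-1}-\alpha\,\omega_{\tau_k(i)}(\mathbf{z}^k_{i-1})$ for $i=1,\dots,n$, and $\mathbf{z}^{k+1}_0=\mathbf{z}^k_n$. The maximum is over all sequences of permutations (adversarial shuffling). *)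

theory Defs
  imports "HOL-Analysis.Analysis" "HOL-Combinatorics.Permutations"
begin

fun gda_epoch :: "real \<Rightarrow> (nat \<Rightarrow> 'a::real_normed_vector \<Rightarrow> 'a) \<Rightarrow> (nat \<Rightarrow> nat) \<Rightarrow> 'a \<Rightarrow> nat \<Rightarrow> 'a" where
  "gda_epoch a w perm z 0 = z"
| "gda_epoch a w perm z (Suc i) =
     (let y = gda_epoch a w perm z i in y - a *\<^sub>R w (perm (Suc i)) y)"

text \<open>gda_run a w n tau z0 K = z^{K+1}_0, after epochs 1..K using permutations tau 1, ..., tau K.\<close>
fun gda_run :: "real \<Rightarrow> (nat \<Rightarrow> 'a::real_normed_vector \<Rightarrow> 'a) \<Rightarrow> nat \<Rightarrow> (nat \<Rightarrow> nat \<Rightarrow> nat) \<Rightarrow> 'a \<Rightarrow> nat \<Rightarrow> 'a" where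
  "gda_run a w n tau z0 0 = z0"
| "gda_run a w n tau z0 (Suc k) = gda_epoch a w (tau (Suc k)) (gda_run a w n tau z0 k) n"

definition mean_op :: "(nat \<Rightarrow> 'a::real_normed_vector \<Rightarrow> 'a) \<Rightarrow> nat \<Rightarrow> 'a \<Rightarrow> 'a" where
  "mean_op w n z = (1 / real n) *\<^sub>R (\<Sum>i=1..n. w i z)"

definition strongly_monotone :: "real \<Rightarrow> ('a::real_inner \<Rightarrow> 'a) \<Rightarrow> bool" where
  "strongly_monotone mu f \<longleftrightarrow> (\<forall>z1 z2. inner (f z1 - f z2) (z1 - z2) \<ge> mu * (norm (z1 - z2))^2)"

end

theory Submission
  imports Defs
begin

text \<open>Over one epoch every index is visited once, so the epoch is a single gradient step of size
  \<open>n\<alpha>\<close> on the mean operator \<open>\<nu>\<close> from the epoch's starting point \<open>z\<close>, up to an error bounded by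
  \<open>\<alpha> l\<close> times the total drift \<open>\<Sum>\<^sub>j \<parallel>z\<^sub>j - z\<parallel>\<close> inside the epoch. The drift is controlled by the
  partial sums of \<open>\<parallel>\<omega>\<^sub>i(z\<^sup>*)\<parallel>\<close> plus \<open>\<parallel>z - z\<^sup>*\<parallel>\<close>, so for \<open>\<alpha> \<le> \<mu>/(5nl\<^sup>2)\<close> one epoch contracts
  \<open>\<parallel>z - z\<^sup>*\<parallel>\<^sup>2\<close> by the factor \<open>1 - n\<alpha>\<mu>\<close> at the cost of an additive \<open>3l\<^sup>2\<sigma>\<^sub>*\<^sup>2\<alpha>\<^sup>3n\<^sup>3/\<mu>\<close>,
  whatever the permutation. Unrolling over K epochs gives the first bound; the second is the
  first one evaluated at the tuned step size.\<close>

lemma gda_epoch_eq_sum: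
  "gda_epoch a w p z i = z - a *\<^sub>R (\<Sum>j<i. w (p (Suc j)) (gda_epoch a w p z j))"
  by (induction i) (simp_all add: Let_def algebra_simps)

lemma sum_lessThan_permutes:
  assumes "p permutes {1..n}"
  shows "(\<Sum>j<n. f (p (Suc j))) = (\<Sum>i=1..n. (f i :: 'b::comm_monoid_add))"
proof -
  have "(\<Sum>j<n. f (p (Suc j))) = (\<Sum>i=1..n. f (p i))"
    by (induction n) auto
  also have "\<dots> = (\<Sum>i=1..n. f i)"
    using sum.permute[OF assms, of f] by simp
  finally show ?thesis .
qed

lemma sum_lessThan_of_nat_le: "(\<Sum>i<n. real i) \<le> real n ^ 2 / 2"
proof -
  have "2 * (\<Sum>i<m. real i) = real m * (real m - 1)" for m
    by (induction m) (auto simp: algebra_simps)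
  from this[of n] show ?thesis
    by (simp add: power2_eq_square algebra_simps)
qed

lemma sum_partial_sums_squared_le:
  fixes A :: "nat \<Rightarrow> real"
  shows "(\<Sum>i<n. \<Sum>j<i. A j)^2 \<le> real n ^ 3 / 2 * (\<Sum>j<n. (A j)^2)"
proof -
  define S where "S = (\<Sum>j<n. (A j)^2)"
  have partial: "(\<Sum>j<i. A j)^2 \<le> S * real i" if "i < n" for i
  proof -
    have "(\<Sum>j<i. A j)^2 \<le> (\<Sum>j<i. (A j)^2) * real i"
      using sum_squared_le_sum_of_squares[of A "{..<i}"] by simp
    also have "(\<Sum>j<i. (A j)^2) \<le> S"
      unfolding S_def using that by (intro sum_mono2) auto
    finally show ?thesis by (simp add: mult_right_mono)
  qed
  have "(\<Sum>i<n. \<Sum>j<i. A j)^2 \<le> (\<Sum>i<n. (\<Sum>j<i. A j)^2) * real n"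
    using sum_squared_le_sum_of_squares[of "\<lambda>i. \<Sum>j<i. A j" "{..<n}"] by simp
  also have "\<dots> \<le> (\<Sum>i<n. S * real i) * real n"
    using partial by (intro mult_right_mono sum_mono) auto
  also have "\<dots> \<le> S * (real n ^ 2 / 2) * real n"
    unfolding sum_distrib_left[symmetric] S_def
    by (intro mult_right_mono mult_left_mono sum_lessThan_of_nat_le sum_nonneg) auto
  finally show ?thesis
    unfolding S_def by (simp add: power2_eq_square power3_eq_cube algebra_simps)
qed

text \<open>Young's inequality \<open>2RP \<le> (2b/5) R\<^sup>2 + (5/(2b)) P\<^sup>2\<close>, with the weight chosen so that the
  contraction \<open>1 - 31b/40\<close> survives squaring as \<open>1 - b\<close> when \<open>b \<le> 1/5\<close>.\<close>

lemma square_le_contraction_plus: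
  fixes b r s P :: real
  assumes b: "0 < b" "b \<le> 1/5" and r: "0 \<le> r" and s: "0 \<le> s" and P: "0 \<le> P"
    and s_le: "s \<le> (1 - 31/40 * b) * r + P"
  shows "s^2 \<le> (1 - b) * r^2 + (1 + 5 / (2 * b)) * P^2"
proof -
  define R where "R = (1 - 31/40 * b) * r"
  have "R \<ge> 0" unfolding R_def using b r by simp
  then have "s^2 \<le> (R + P)^2"
    using s s_le P unfolding R_def by (intro power_mono) auto
  also have "\<dots> \<le> (1 + 2/5 * b) * R^2 + (1 + 5 / (2 * b)) * P^2"
  proof -
    have "b * (2 * R * P) \<le> b * (2/5 * b * R^2 + 5 / (2 * b) * P^2)"
      using b sum_power2_ge_zero[of "b * R - 5/2 * P" 0]
      by (simp add: power2_eq_square algebra_simps)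
    then have "2 * R * P \<le> 2/5 * b * R^2 + 5 / (2 * b) * P^2"
      using b by simp
    then show ?thesis by (simp add: power2_eq_square algebra_simps)
  qed
  also have "(1 + 2/5 * b) * R^2 \<le> (1 - b) * r^2"
  proof -
    have "b * b * b \<le> b / 25"
      using b mult_mono[OF b(2) b(2)] mult_right_mono[of "b * b" "1/25" b] by simp
    moreover have "(1 + 2/5 * b) * (1 - 31/40 * b)^2
        = 1 - 23/20 * b - 31/1600 * (b * b) + 961/4000 * (b * b * b)"
      by (simp add: power2_eq_square field_simps)
    ultimately have "(1 + 2/5 * b) * (1 - 31/40 * b)^2 \<le> 1 - b"
      using b zero_le_square[of b] by linarith
    then have "(1 + 2/5 * b) * (1 - 31/40 * b)^2 * r^2 \<le> (1 - b) * r^2"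
      by (rule mult_right_mono) simp
    then show ?thesis
      unfolding R_def by (simp add: power_mult_distrib mult_ac)
  qed
  finally show ?thesis by simp
qed

lemma lipschitz_on_mean_op:
  fixes w :: "nat \<Rightarrow> 'a::real_normed_vector \<Rightarrow> 'a"
  assumes n: "n \<ge> 1" and lip: "\<And>i. i \<in> {1..n} \<Longrightarrow> l-lipschitz_on UNIV (w i)"
  shows "l-lipschitz_on UNIV (mean_op w n)"
proof (rule lipschitz_onI)
  show "0 \<le> l"
    using lipschitz_on_nonneg[OF lip[of 1]] n by simp
  fix x y :: 'a
  have "norm (mean_op w n x - mean_op w n y) = norm (\<Sum>i=1..n. w i x - w i y) / real n"
    by (simp add: mean_op_def sum_subtractf scaleR_diff_right[symmetric])
  also have "\<dots> \<le> (\<Sum>i=1..n. norm (w i x - w i y)) / real n"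
    by (intro divide_right_mono norm_sum) auto
  also have "\<dots> \<le> (\<Sum>i=1..n. l * norm (x - y)) / real n"
    by (intro divide_right_mono sum_mono lipschitz_on_normD[OF lip]) auto
  also have "\<dots> = l * norm (x - y)"
    using n by simp
  finally show "dist (mean_op w n x) (mean_op w n y) \<le> l * dist x y"
    by (simp add: dist_norm)
qed

lemma strongly_monotone_le_lipschitz:
  fixes f :: "'a::euclidean_space \<Rightarrow> 'a"
  assumes "strongly_monotone mu f" and "l-lipschitz_on UNIV f"
  shows "mu \<le> l"
proof -
  obtain b :: 'a where "b \<in> Basis" using nonempty_Basis by blast
  then have b: "norm b > 0" using nonzero_Basis by auto
  have "mu * (norm b)^2 \<le> inner (f b - f 0) b"
    using assms(1) unfolding strongly_monotone_def by (metis diff_zero)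
  also have "\<dots> \<le> norm (f b - f 0) * norm b"
    by (rule norm_cauchy_schwarz)
  also have "\<dots> \<le> l * norm b * norm b"
    using lipschitz_on_normD[OF assms(2), of b 0] b by (intro mult_right_mono) auto
  finally show ?thesis
    using b by (simp add: power2_eq_square)
qed

lemma strongly_monotone_dist_root_le:
  fixes f :: "'a::real_inner \<Rightarrow> 'a"
  assumes "strongly_monotone mu f" and "f zs = 0"
  shows "mu * norm (z - zs) \<le> norm (f z)"
proof (cases "z = zs")
  case False
  have "mu * (norm (z - zs))^2 \<le> inner (f z - f zs) (z - zs)"
    using assms(1) unfolding strongly_monotone_def by blast
  also have "\<dots> \<le> norm (f z) * norm (z - zs)"
    using assms(2) norm_cauchy_schwarz by simp
  finally show ?thesis
    using False by (simp add: power2_eq_square)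
qed simp

lemma strongly_monotone_gradient_step:
  fixes f :: "'a::real_inner \<Rightarrow> 'a"
  assumes mon: "strongly_monotone mu f" and lip: "l-lipschitz_on UNIV f"
    and root: "f zs = 0" and c: "c \<ge> 0"
  shows "(norm ((z - zs) - c *\<^sub>R f z))^2 \<le> (1 - 2 * c * mu + c^2 * l^2) * (norm (z - zs))^2"
proof -
  have expand: "(norm (u - c *\<^sub>R v))^2 = (norm u)^2 - 2 * c * inner v u + c^2 * (norm v)^2" for u v :: 'a
  proof -
    have "(norm (u - c *\<^sub>R v))^2 = inner (u - c *\<^sub>R v) (u - c *\<^sub>R v)"
      by (rule power2_norm_eq_inner)
    also have "\<dots> = inner u u - 2 * c * inner v u + c^2 * inner v v"
      by (simp add: inner_commute algebra_simps power2_eq_square)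
    finally show ?thesis by (simp add: power2_norm_eq_inner)
  qed
  have "(norm ((z - zs) - c *\<^sub>R f z))^2
      = (norm (z - zs))^2 - 2 * c * inner (f z) (z - zs) + c^2 * (norm (f z))^2"
    by (rule expand)
  also have "\<dots> \<le> (norm (z - zs))^2 - 2 * c * (mu * (norm (z - zs))^2) + c^2 * (l * norm (z - zs))^2"
  proof -
    have "mu * (norm (z - zs))^2 \<le> inner (f z) (z - zs)"
      using mon root unfolding strongly_monotone_def by (metis diff_zero)
    then have "2 * c * (mu * (norm (z - zs))^2) \<le> 2 * c * inner (f z) (z - zs)"
      using c by (intro mult_left_mono) auto
    moreover have "norm (f z) \<le> l * norm (z - zs)"
      using lipschitz_on_normD[OF lip, of z zs] root by simp
    then have "c^2 * (norm (f z))^2 \<le> c^2 * (l * norm (z - zs))^2"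
      by (intro mult_left_mono power_mono) auto
    ultimately show ?thesis by linarith
  qed
  finally show ?thesis
    by (simp add: power2_eq_square algebra_simps)
qed

locale gda_problem =
  fixes w :: "nat \<Rightarrow> 'a::euclidean_space \<Rightarrow> 'a" and n :: nat and l mu :: real and zs :: 'a
  assumes n_pos: "n \<ge> 1"
    and lipschitz: "\<And>i. i \<in> {1..n} \<Longrightarrow> l-lipschitz_on UNIV (w i)"
    and mu_pos: "mu > 0"
    and monotone: "strongly_monotone mu (mean_op w n)"
    and root: "mean_op w n zs = 0"
begin

definition sigma_sq :: real where
  "sigma_sq = (1 / real n) * (\<Sum>i=1..n. (norm (w i zs))^2)"

lemma sigma_sq_nonneg: "sigma_sq \<ge> 0"
  unfolding sigma_sq_def by (intro mult_nonneg_nonneg sum_nonneg) auto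

lemma lipschitz_mean: "l-lipschitz_on UNIV (mean_op w n)"
  by (rule lipschitz_on_mean_op[OF n_pos lipschitz])

lemma mu_le_l: "mu \<le> l"
  by (rule strongly_monotone_le_lipschitz[OF monotone lipschitz_mean])

lemma l_pos: "l > 0"
  using mu_le_l mu_pos by linarith

lemma lipschitz_permuted:
  assumes "p permutes {1..n}" and "j < n"
  shows "norm (w (p (Suc j)) x - w (p (Suc j)) y) \<le> l * norm (x - y)"
proof -
  have "p (Suc j) \<in> {1..n}"
    using permutes_in_image[OF assms(1), of "Suc j"] assms(2) by simp
  then show ?thesis by (rule lipschitz_on_normD[OF lipschitz]) auto
qed

text \<open>With \<open>U = \<Sum>j<n. \<parallel>z\<^sub>j - z\<parallel>\<close>, Lipschitz continuity around \<open>z\<^sup>*\<close> gives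
  \<open>\<parallel>z\<^sub>i - z\<parallel> \<le> \<alpha> (\<Sum>j<i. \<parallel>\<omega>\<^bsub>\<tau>(j+1)\<^esub>(z\<^sup>*)\<parallel>) + \<alpha> i l \<parallel>z - z\<^sup>*\<parallel> + \<alpha> l U\<close>; summing over
  \<open>i < n\<close> bounds \<open>U\<close> in terms of itself.\<close>

lemma epoch_drift:
  assumes p: "p permutes {1..n}" and a: "a \<ge> 0"
  shows "(1 - a * l * real n) * (\<Sum>j<n. norm (gda_epoch a w p z j - z))
    \<le> a * (\<Sum>i<n. \<Sum>j<i. norm (w (p (Suc j)) zs)) + a * l * norm (z - zs) * real n ^ 2 / 2"
proof -
  define D where "D j = norm (gda_epoch a w p z j - z)" for j
  define A where "A j = norm (w (p (Suc j)) zs)" for j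
  define r where "r = norm (z - zs)"
  define U where "U = (\<Sum>j<n. D j)"
  have step: "norm (w (p (Suc j)) (gda_epoch a w p z j)) \<le> A j + l * r + l * D j" if "j < n" for j
  proof -
    have "norm (w (p (Suc j)) (gda_epoch a w p z j))
        \<le> A j + norm (w (p (Suc j)) (gda_epoch a w p z j) - w (p (Suc j)) zs)"
      unfolding A_def by (rule norm_triangle_sub)
    also have "\<dots> \<le> A j + l * norm ((gda_epoch a w p z j - z) + (z - zs))"
      using lipschitz_permuted[OF p that] by simp
    also have "\<dots> \<le> A j + l * (D j + r)"
      unfolding D_def r_def using l_pos by (intro add_left_mono mult_left_mono norm_triangle_ineq) auto
    finally show ?thesis by (simp add: algebra_simps)
  qed
  have D_le: "D i \<le> a * (\<Sum>j<i. A j) + a * real i * l * r + a * l * U" if "i \<le> n" for i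
  proof -
    have "D i \<le> a * (\<Sum>j<i. norm (w (p (Suc j)) (gda_epoch a w p z j)))"
      unfolding D_def using a
      by (subst gda_epoch_eq_sum) (simp add: mult_left_mono norm_sum)
    also have "\<dots> \<le> a * (\<Sum>j<i. A j + l * r + l * D j)"
      using a that step by (intro mult_left_mono sum_mono) auto
    also have "\<dots> = a * (\<Sum>j<i. A j) + a * real i * l * r + a * l * (\<Sum>j<i. D j)"
      by (simp add: sum.distrib sum_distrib_left algebra_simps)
    also have "\<dots> \<le> a * (\<Sum>j<i. A j) + a * real i * l * r + a * l * U"
      unfolding U_def D_def using that a l_pos by (intro add_left_mono mult_left_mono sum_mono2) auto
    finally show ?thesis .
  qed
  have "(\<Sum>i<n. D i) \<le> (\<Sum>i<n. a * (\<Sum>j<i. A j) + a * real i * l * r + a * l * U)"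
    by (intro sum_mono D_le) auto
  then have "U \<le> (\<Sum>i<n. a * (\<Sum>j<i. A j) + a * real i * l * r + a * l * U)"
    by (simp only: U_def[symmetric])
  also have "\<dots> = a * (\<Sum>i<n. \<Sum>j<i. A j) + a * l * r * (\<Sum>i<n. real i) + a * l * real n * U"
    by (simp add: sum.distrib sum_distrib_left sum_distrib_right algebra_simps)
  also have "\<dots> \<le> a * (\<Sum>i<n. \<Sum>j<i. A j) + a * l * r * (real n ^ 2 / 2) + a * l * real n * U"
    unfolding r_def using a l_pos by (intro add_right_mono add_left_mono mult_left_mono sum_lessThan_of_nat_le) auto
  finally show ?thesis
    unfolding U_def D_def A_def r_def by (simp add: algebra_simps)
qed

text \<open>Since \<open>\<Sum>j<n. \<omega>\<^bsub>\<tau>(j+1)\<^esub>(z) = n \<nu>(z)\<close>, the end of the epoch differs from the single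
  step \<open>z - n\<alpha>\<nu>(z)\<close> only by the Lipschitz errors \<open>\<omega>\<^bsub>\<tau>(j+1)\<^esub>(z\<^sub>j) - \<omega>\<^bsub>\<tau>(j+1)\<^esub>(z)\<close>.\<close>

lemma epoch_end_dist:
  assumes p: "p permutes {1..n}" and a: "a \<ge> 0"
  shows "norm (gda_epoch a w p z n - zs)
    \<le> norm ((z - zs) - (a * real n) *\<^sub>R mean_op w n z) + a * l * (\<Sum>j<n. norm (gda_epoch a w p z j - z))"
proof -
  define e where "e = (\<Sum>j<n. w (p (Suc j)) (gda_epoch a w p z j) - w (p (Suc j)) z)"
  have "(\<Sum>j<n. w (p (Suc j)) z) = real n *\<^sub>R mean_op w n z"
    using sum_lessThan_permutes[OF p, of "\<lambda>i. w i z"] n_pos unfolding mean_op_def by simp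
  then have "gda_epoch a w p z n - zs = ((z - zs) - (a * real n) *\<^sub>R mean_op w n z) - a *\<^sub>R e"
    unfolding e_def sum_subtractf
    by (subst gda_epoch_eq_sum) (simp add: algebra_simps)
  then have "norm (gda_epoch a w p z n - zs) \<le> norm ((z - zs) - (a * real n) *\<^sub>R mean_op w n z) + a * norm e"
    using a norm_triangle_ineq4 by (metis abs_of_nonneg norm_scaleR)
  also have "norm e \<le> (\<Sum>j<n. l * norm (gda_epoch a w p z j - z))"
    unfolding e_def by (intro order.trans[OF norm_sum] sum_mono lipschitz_permuted[OF p]) auto
  finally show ?thesis
    using a by (simp add: sum_distrib_left mult.assoc mult_left_mono)
qed

end

locale gda_step = gda_problem +
  fixes a :: real
  assumes a_pos: "a > 0" and a_le: "a \<le> mu / (5 * real n * l^2)"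
begin

lemma step_size_bounds:
  shows "real n * a * mu \<le> 1/5" and "a * l * real n \<le> 1/5"
    and "(a * real n * l)^2 \<le> real n * a * mu / 5"
proof -
  have N: "real n \<ge> 1" using n_pos by simp
  have step: "a * real n * l^2 \<le> mu / 5"
    using a_le l_pos N by (simp add: field_simps)
  have "(a * l * real n) * l \<le> (1/5) * l"
    using step mu_le_l by (simp add: power2_eq_square algebra_simps)
  then show anl: "a * l * real n \<le> 1/5"
    using l_pos by (simp add: mult_ac)
  have "real n * a * mu \<le> real n * a * l"
    using mu_le_l a_pos N by (intro mult_left_mono) auto
  then show "real n * a * mu \<le> 1/5"
    using anl by (simp add: algebra_simps)
  have "(a * real n) * (a * real n * l^2) \<le> (a * real n) * (mu / 5)"
    using step a_pos N by (intro mult_left_mono) auto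
  then show "(a * real n * l)^2 \<le> real n * a * mu / 5"
    by (simp add: power2_eq_square algebra_simps)
qed

lemma averaged_step_contracts:
  "norm ((z - zs) - (a * real n) *\<^sub>R mean_op w n z) \<le> (1 - 9/10 * (real n * a * mu)) * norm (z - zs)"
proof (rule power2_le_imp_le)
  define b where "b = real n * a * mu"
  have "(norm ((z - zs) - (a * real n) *\<^sub>R mean_op w n z))^2
      \<le> (1 - 2 * b + (a * real n * l)^2) * (norm (z - zs))^2"
    using strongly_monotone_gradient_step[OF monotone lipschitz_mean root, of "a * real n" z] a_pos
    unfolding b_def by (simp add: algebra_simps)
  also have "\<dots> \<le> (1 - 9/5 * b) * (norm (z - zs))^2"
    using step_size_bounds(3) unfolding b_def by (intro mult_right_mono) auto
  also have "\<dots> \<le> ((1 - 9/10 * b) * norm (z - zs))^2"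
    unfolding power_mult_distrib by (intro mult_right_mono) (auto simp: power2_eq_square algebra_simps)
  finally show "(norm ((z - zs) - (a * real n) *\<^sub>R mean_op w n z))^2 \<le> ((1 - 9/10 * b) * norm (z - zs))^2" .
  show "0 \<le> (1 - 9/10 * (real n * a * mu)) * norm (z - zs)"
    using step_size_bounds(1) by simp
qed

lemma epoch_drift_scaled:
  assumes p: "p permutes {1..n}"
  shows "a * l * (\<Sum>j<n. norm (gda_epoch a w p z j - z))
    \<le> 5/4 * a^2 * l * (\<Sum>i<n. \<Sum>j<i. norm (w (p (Suc j)) zs)) + real n * a * mu / 8 * norm (z - zs)"
proof -
  define U where "U = (\<Sum>j<n. norm (gda_epoch a w p z j - z))"
  define T where "T = (\<Sum>i<n. \<Sum>j<i. norm (w (p (Suc j)) zs))"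
  define r where "r = norm (z - zs)"
  have "4/5 * U \<le> (1 - a * l * real n) * U"
    unfolding U_def using step_size_bounds(2) by (intro mult_right_mono sum_nonneg) auto
  also have "\<dots> \<le> a * T + a * l * r * real n ^ 2 / 2"
    unfolding U_def T_def r_def using epoch_drift[OF p] a_pos by simp
  finally have "a * l * U \<le> a * l * (5/4 * (a * T + a * l * r * real n ^ 2 / 2))"
    using a_pos l_pos by (intro mult_left_mono) auto
  also have "\<dots> = 5/4 * a^2 * l * T + 5/8 * (a * real n * l)^2 * r"
    by (simp add: power2_eq_square algebra_simps)
  also have "\<dots> \<le> 5/4 * a^2 * l * T + real n * a * mu / 8 * r"
    unfolding r_def using step_size_bounds(3) by (intro add_left_mono mult_right_mono) auto
  finally show ?thesis
    unfolding U_def T_def r_def .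
qed

lemma drift_noise_le:
  assumes p: "p permutes {1..n}"
  shows "(1 + 5 / (2 * (real n * a * mu))) * (5/4 * a^2 * l * (\<Sum>i<n. \<Sum>j<i. norm (w (p (Suc j)) zs)))^2
    \<le> 3 * l^2 * sigma_sq * a^3 * real n^3 / mu"
proof -
  define A where "A j = norm (w (p (Suc j)) zs)" for j
  define T where "T = (\<Sum>i<n. \<Sum>j<i. A j)"
  define b where "b = real n * a * mu"
  define Q where "Q = l^2 * sigma_sq * a^3 * real n^3 / mu"
  have b: "0 < b" "b \<le> 1/5"
    unfolding b_def using a_pos mu_pos n_pos step_size_bounds(1) by auto
  have "(\<Sum>j<n. (A j)^2) = real n * sigma_sq"
    unfolding A_def sigma_sq_def using sum_lessThan_permutes[OF p, of "\<lambda>i. (norm (w i zs))^2"] n_pos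
    by simp
  then have T2: "T^2 \<le> real n ^ 3 / 2 * (real n * sigma_sq)"
    unfolding T_def using sum_partial_sums_squared_le[of A n] by simp
  have "(5/4 * a^2 * l * T)^2 = 25/16 * a^4 * l^2 * T^2"
    by (simp add: power2_eq_square power4_eq_xxxx)
  also have "\<dots> \<le> 25/16 * a^4 * l^2 * (real n ^ 3 / 2 * (real n * sigma_sq))"
    using T2 by (intro mult_left_mono) auto
  also have "\<dots> = 25/32 * (b * Q)"
    unfolding b_def Q_def using mu_pos by (simp add: eval_nat_numeral field_simps)
  finally have "(1 + 5 / (2 * b)) * (5/4 * a^2 * l * T)^2 \<le> (1 + 5 / (2 * b)) * (25/32 * (b * Q))"
    using b by (intro mult_left_mono) auto
  also have "\<dots> = 25/32 * (b + 5/2) * Q"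
    using b by (simp add: field_simps)
  also have "\<dots> \<le> 3 * Q"
    unfolding Q_def using b a_pos mu_pos sigma_sq_nonneg by (intro mult_right_mono) auto
  finally show ?thesis
    unfolding Q_def b_def T_def A_def by simp
qed

lemma one_epoch:
  assumes p: "p permutes {1..n}"
  shows "(norm (gda_epoch a w p z n - zs))^2
    \<le> (1 - real n * a * mu) * (norm (z - zs))^2 + 3 * l^2 * sigma_sq * a^3 * real n^3 / mu"
proof -
  define b where "b = real n * a * mu"
  define r where "r = norm (z - zs)"
  define U where "U = (\<Sum>j<n. norm (gda_epoch a w p z j - z))"
  define P where "P = 5/4 * a^2 * l * (\<Sum>i<n. \<Sum>j<i. norm (w (p (Suc j)) zs))"
  have b: "0 < b" "b \<le> 1/5"
    unfolding b_def using a_pos mu_pos n_pos step_size_bounds(1) by auto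
  have "norm (gda_epoch a w p z n - zs) \<le> norm ((z - zs) - (a * real n) *\<^sub>R mean_op w n z) + a * l * U"
    unfolding U_def using epoch_end_dist[OF p] a_pos by simp
  also have "\<dots> \<le> (1 - 9/10 * b) * r + (P + b / 8 * r)"
    unfolding b_def r_def U_def P_def
    by (intro add_mono averaged_step_contracts epoch_drift_scaled[OF p])
  finally have "norm (gda_epoch a w p z n - zs) \<le> (1 - 31/40 * b) * r + P"
    by (simp add: algebra_simps)
  then have "(norm (gda_epoch a w p z n - zs))^2 \<le> (1 - b) * r^2 + (1 + 5 / (2 * b)) * P^2"
    using b a_pos l_pos unfolding r_def P_def
    by (intro square_le_contraction_plus) (auto simp: sum_nonneg)
  also have "(1 + 5 / (2 * b)) * P^2 \<le> 3 * l^2 * sigma_sq * a^3 * real n^3 / mu"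
    unfolding b_def P_def by (rule drift_noise_le[OF p])
  finally show ?thesis
    unfolding b_def r_def by simp
qed

lemma gda_run_geometric:
  assumes "\<forall>k\<in>{1..K}. tau k permutes {1..n}" and "k \<le> K"
  shows "(norm (gda_run a w n tau z0 k - zs))^2
    \<le> (1 - real n * a * mu)^k * (norm (z0 - zs))^2 + real k * (3 * l^2 * sigma_sq * a^3 * real n^3 / mu)"
  using assms(2)
proof (induction k)
  case (Suc k)
  define C where "C = 3 * l^2 * sigma_sq * a^3 * real n^3 / mu"
  define q where "q = 1 - real n * a * mu"
  have q: "0 \<le> q" "q \<le> 1"
    unfolding q_def using step_size_bounds(1) a_pos mu_pos by auto
  have C: "C \<ge> 0"
    unfolding C_def using a_pos mu_pos sigma_sq_nonneg by simp
  have "(norm (gda_run a w n tau z0 (Suc k) - zs))^2 \<le> q * (norm (gda_run a w n tau z0 k - zs))^2 + C"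
    unfolding q_def C_def using assms(1) Suc.prems by (simp add: one_epoch)
  also have "\<dots> \<le> q * (q^k * (norm (z0 - zs))^2 + real k * C) + C"
    using Suc q unfolding C_def q_def by (intro add_right_mono mult_left_mono) auto
  also have "\<dots> \<le> q^Suc k * (norm (z0 - zs))^2 + real (Suc k) * C"
    using q C mult_right_mono[of q 1 "real k * C"] by (simp add: algebra_simps)
  finally show ?case unfolding C_def q_def .
qed simp

lemma gda_run_bound:
  assumes "\<forall>k\<in>{1..K}. tau k permutes {1..n}"
  shows "(norm (gda_run a w n tau z0 K - zs))^2
    \<le> 2 * exp (- real n * a * mu * real K) * (norm (z0 - zs))^2
      + 3 * l^2 * sigma_sq * a^3 * real n^3 * real K / mu"
proof -
  have "(1 - real n * a * mu)^K \<le> exp (- (real n * a * mu))^K"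
    using step_size_bounds(1) exp_ge_add_one_self[of "- (real n * a * mu)"] by (intro power_mono) auto
  also have "\<dots> = exp (- real n * a * mu * real K)"
    by (simp add: exp_of_nat2_mult[symmetric])
  finally have "(1 - real n * a * mu)^K * (norm (z0 - zs))^2
      \<le> exp (- real n * a * mu * real K) * (norm (z0 - zs))^2"
    by (rule mult_right_mono) simp
  moreover have "real K * (3 * l^2 * sigma_sq * a^3 * real n^3 / mu)
      = 3 * l^2 * sigma_sq * a^3 * real n^3 * real K / mu"
    by simp
  moreover have "0 \<le> exp (- real n * a * mu * real K) * (norm (z0 - zs))^2"
    by simp
  ultimately show ?thesis
    using gda_run_geometric[OF assms order_refl, of z0] by linarith
qed

end

context gda_problem
begin

text \<open>With \<open>\<alpha> = 2 ln X/(\<mu>nK)\<close>, \<open>X = \<parallel>\<nu>(z\<^sub>0)\<parallel>K/\<mu>\<close>, the exponential factor is \<open>1/X\<^sup>2\<close>, and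
  \<open>\<mu>\<parallel>z\<^sub>0 - z\<^sup>*\<parallel> \<le> \<parallel>\<nu>(z\<^sub>0)\<parallel>\<close> turns \<open>\<parallel>z\<^sub>0 - z\<^sup>*\<parallel>\<^sup>2/X\<^sup>2\<close> into at most \<open>1/K\<^sup>2\<close>.\<close>

lemma tuned_exp_term_le:
  assumes X: "norm (mean_op w n z0) * real K / mu > 1" and K: "K \<ge> 1"
  shows "exp (- real n * (2 * ln (norm (mean_op w n z0) * real K / mu) / (mu * real n * real K)) * mu * real K)
      * (norm (z0 - zs))^2 \<le> 1 / real K^2"
proof -
  define g where "g = norm (mean_op w n z0)"
  have "g \<noteq> 0"
    using X unfolding g_def by auto
  then have g: "g > 0"
    unfolding g_def by simp
  define Y where "Y = g * real K / mu"
  have Y: "Y > 1" using X unfolding Y_def g_def .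
  have "exp (- real n * (2 * ln Y / (mu * real n * real K)) * mu * real K) = exp (- (2 * ln Y))"
    using mu_pos n_pos K by (intro arg_cong[where f = exp]) (simp add: field_simps)
  also have "\<dots> = inverse (exp (ln Y) ^ 2)"
    by (simp add: exp_minus exp_double[symmetric])
  also have "\<dots> = mu^2 / (g^2 * real K^2)"
    using Y mu_pos unfolding Y_def by (simp add: power_divide power_mult_distrib)
  finally have e: "exp (- real n * (2 * ln (g * real K / mu) / (mu * real n * real K)) * mu * real K)
      = mu^2 / (g^2 * real K^2)"
    unfolding Y_def .
  have "mu^2 * (norm (z0 - zs))^2 \<le> g^2"
    using power_mono[OF strongly_monotone_dist_root_le[OF monotone root, of z0]] mu_pos
    unfolding g_def by (simp add: power_mult_distrib)
  then show ?thesis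
    unfolding g_def[symmetric] e using g K by (simp add: field_simps)
qed

lemma gda_run_bound_tuned:
  assumes X: "norm (mean_op w n z0) * real K / mu > 1" and K: "K \<ge> 1"
    and perms: "\<forall>k\<in>{1..K}. tau k permutes {1..n}"
    and a_def: "a = min (mu / (5 * real n * l^2))
      (2 * ln (norm (mean_op w n z0) * real K / mu) / (mu * real n * real K))"
  shows "(norm (gda_run a w n tau z0 K - zs))^2
    \<le> 2 * exp (- real K / (5 * (l / mu)^2)) * (norm (z0 - zs))^2
      + (2 * mu^2 + 24 * (l / mu)^2 * sigma_sq * (ln (norm (mean_op w n z0) * real K / mu))^3)
        / (mu^2 * real K^2)"
proof -
  define L where "L = ln (norm (mean_op w n z0) * real K / mu)"
  define a2 where "a2 = 2 * L / (mu * real n * real K)"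
  have "L > 0" unfolding L_def using X by simp
  then have a2: "a2 > 0" unfolding a2_def using mu_pos n_pos K by simp
  then have a: "0 < a" "a \<le> mu / (5 * real n * l^2)" "a \<le> a2"
    unfolding a_def a2_def L_def using mu_pos l_pos n_pos by auto
  interpret gda_step w n l mu zs a
    using a by unfold_locales auto
  have exp_term: "exp (- real n * a * mu * real K) * (norm (z0 - zs))^2
      \<le> exp (- real K / (5 * (l / mu)^2)) * (norm (z0 - zs))^2 + 1 / real K^2"
  proof (cases "a = a2")
    case True
    then have "exp (- real n * a * mu * real K) * (norm (z0 - zs))^2 \<le> 1 / real K^2"
      using tuned_exp_term_le[OF X K] unfolding a2_def L_def by simp
    moreover have "0 \<le> exp (- real K / (5 * (l / mu)^2)) * (norm (z0 - zs))^2"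
      by simp
    ultimately show ?thesis by linarith
  next
    case False
    then have "a = mu / (5 * real n * l^2)" unfolding a_def a2_def L_def by linarith
    then have "- real n * a * mu * real K = - real K / (5 * (l / mu)^2)"
      using mu_pos l_pos n_pos by (simp add: field_simps power2_eq_square)
    then show ?thesis by simp
  qed
  have "3 * l^2 * sigma_sq * a^3 * real n^3 * real K / mu \<le> 3 * l^2 * sigma_sq * a2^3 * real n^3 * real K / mu"
    using a sigma_sq_nonneg mu_pos by (intro divide_right_mono mult_right_mono mult_left_mono power_mono) auto
  also have "\<dots> = 24 * (l / mu)^2 * sigma_sq * L^3 / (mu^2 * real K^2)"
    unfolding a2_def using mu_pos n_pos K by (simp add: field_simps power2_eq_square power3_eq_cube)
  finally have "3 * l^2 * sigma_sq * a^3 * real n^3 * real K / mu \<le> 24 * (l / mu)^2 * sigma_sq * L^3 / (mu^2 * real K^2)" .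
  moreover have "(2 * mu^2 + 24 * (l / mu)^2 * sigma_sq * L^3) / (mu^2 * real K^2)
      = 2 / real K^2 + 24 * (l / mu)^2 * sigma_sq * L^3 / (mu^2 * real K^2)"
    using mu_pos by (simp add: add_divide_distrib)
  ultimately show ?thesis
    using gda_run_bound[OF perms, of z0] exp_term unfolding L_def[symmetric] by linarith
qed

end

theorem theorem2:
  fixes w :: "nat \<Rightarrow> 'a::euclidean_space \<Rightarrow> 'a"
    and n :: nat and l mu :: real and z0 zs :: 'a
  assumes n_pos: "n \<ge> 1"
    and lip: "\<And>i. i \<in> {1..n} \<Longrightarrow> l-lipschitz_on UNIV (w i)"
    and mu_pos: "mu > 0"
    and smon: "strongly_monotone mu (mean_op w n)"
    and root: "mean_op w n zs = 0"
  shows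
    "(\<forall>a K tau. 0 < a \<and> a \<le> mu / (5 * real n * l^2) \<and> K \<ge> 1 \<and>
        (\<forall>k\<in>{1..K}. tau k permutes {1..n}) \<longrightarrow>
        (norm (gda_run a w n tau z0 K - zs))^2
          \<le> 2 * exp (- real n * a * mu * real K) * (norm (z0 - zs))^2
            + 3 * l^2 * ((1 / real n) * (\<Sum>i=1..n. (norm (w i zs))^2)) * a^3 * real n^3 * real K / mu)
     \<and>
     (\<forall>K tau. norm (mean_op w n z0) * real K / mu > 1 \<and> K \<ge> 1 \<and>
        (\<forall>k\<in>{1..K}. tau k permutes {1..n}) \<longrightarrow>
        (let a = min (mu / (5 * real n * l^2))
                     (2 * ln (norm (mean_op w n z0) * real K / mu) / (mu * real n * real K));
             kappa = l / mu;
             sigma2 = (1 / real n) * (\<Sum>i=1..n. (norm (w i zs))^2)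
         in (norm (gda_run a w n tau z0 K - zs))^2
          \<le> 2 * exp (- real K / (5 * kappa^2)) * (norm (z0 - zs))^2
            + (2 * mu^2 + 24 * kappa^2 * sigma2 * (ln (norm (mean_op w n z0) * real K / mu))^3)
              / (mu^2 * real K^2)))"
proof -
  interpret gda_problem w n l mu zs
    using assms by unfold_locales auto
  have fixed_step: "(norm (gda_run a w n tau z0 K - zs))^2
      \<le> 2 * exp (- real n * a * mu * real K) * (norm (z0 - zs))^2
        + 3 * l^2 * sigma_sq * a^3 * real n^3 * real K / mu"
    if "0 < a" "a \<le> mu / (5 * real n * l^2)" "\<forall>k\<in>{1..K}. tau k permutes {1..n}" for a K tau
  proof -
    interpret gda_step w n l mu zs a
      using that by unfold_locales auto
    show ?thesis using gda_run_bound[OF that(3)] .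
  qed
  show ?thesis
    using fixed_step gda_run_bound_tuned unfolding sigma_sq_def Let_def by blast
qed

end
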